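(* Let $\Sigma\subset\mathbb{R}^n$ be an open cone with vertex at the origin $O$ and $\Omega\subset\Sigma$ a sector-like domain, with $\Gamma=\partial\Omega\cap\Sigma$ and $\Gamma_1=\partial\Omega\setminus\overline\Gamma$. Let $f$ be a smooth positive function on $\mathbb{R}^n$ which is homogeneous of degree $\alpha>0$. If $u$ is a solution of $$\Delta_f u=-1 \text{ in }\Omega,\quad u=0 \text{ on }\Gamma,\quad u_\nu=-c \text{ on }\Gamma,\quad u_\nu=0 \text{ on }\Gamma_1\setminus\{O\},$$ $$\nabla^2\log f(\nabla u,\nabla u)+\frac{\langle\nabla\log f,\nabla u\rangle^2}{\alpha}\leq0 \text{ in }\Omega,$$ for some constant $c$, then $\Delta_f\langle x,\nabla u\rangle=-2$ in $\Omega$, where $x$ is the position vector field.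
   Context: An open cone in $\mathbb{R}^n$ with vertex at the origin $O$ is $\Sigma=\{tx:\ x\in\omega,\ t\in(0,\infty)\}$ for an open connected domain $\omega\subset\mathbb{S}^{n-1}$. Given such $\Sigma$ with $\partial\Sigma\setminus\{O\}$ smooth, a bounded domain $\Omega\subset\Sigma$ is a sector-like domain if, with $\Gamma=\partial\Omega\cap\Sigma$ and $\Gamma_1=\partial\Omega\setminus\overline\Gamma$, one has $\mathcal H^{n-1}(\Gamma)>0$, $\mathcal H^{n-1}(\Gamma_1)>0$, $\Gamma$ is a smooth $(n-1)$-dimensional manifold, and $\partial\Gamma=\partial\Gamma_1\subset\partial\Omega\setminus\{O\}$ is a smooth $(n-2)$-dimensional manifold. $\nu$ is the outward unit normal to $\partial\Omega$, $u_\nu=\langle\nabla u,\nu\rangle$. The drift Laplacian is $\Delta_f=\Delta+\langle\nabla\log f,\nabla\,\cdot\,\rangle$. $f$ is homogeneous of degree $\alpha$ if $\langle\nabla f,x\rangle=\alpha f$. *)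

theory Defs
  imports "HOL-Analysis.Analysis"
begin

definition dd :: "('a::euclidean_space \<Rightarrow> real) \<Rightarrow> 'a \<Rightarrow> 'a \<Rightarrow> real" where
  "dd h v x = frechet_derivative h (at x) v"

fun Ck_on :: "nat \<Rightarrow> 'a::euclidean_space set \<Rightarrow> ('a \<Rightarrow> real) \<Rightarrow> bool" where
  "Ck_on 0 S h \<longleftrightarrow> continuous_on S h"
| "Ck_on (Suc k) S h \<longleftrightarrow> continuous_on S h \<and> (\<forall>x\<in>S. h differentiable (at x))
      \<and> (\<forall>v. Ck_on k S (dd h v))"

definition smooth_on :: "'a::euclidean_space set \<Rightarrow> ('a \<Rightarrow> real) \<Rightarrow> bool" where
  "smooth_on S h \<longleftrightarrow> (\<forall>k. Ck_on k S h)"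

definition grad :: "('a::euclidean_space \<Rightarrow> real) \<Rightarrow> 'a \<Rightarrow> 'a" where
  "grad h x = (\<Sum>b\<in>Basis. dd h b x *\<^sub>R b)"

definition hess :: "('a::euclidean_space \<Rightarrow> real) \<Rightarrow> 'a \<Rightarrow> 'a \<Rightarrow> 'a \<Rightarrow> real" where
  "hess h x v w = dd (dd h w) v x"

definition lap :: "('a::euclidean_space \<Rightarrow> real) \<Rightarrow> 'a \<Rightarrow> real" where
  "lap h x = (\<Sum>b\<in>Basis. hess h x b b)"

definition drift_lap :: "('a::euclidean_space \<Rightarrow> real) \<Rightarrow> ('a \<Rightarrow> real) \<Rightarrow> 'a \<Rightarrow> real" where
  "drift_lap f h x = lap h x + grad (\<lambda>y. ln (f y)) x \<bullet> grad h x"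

definition homogeneous_on :: "'a::euclidean_space set \<Rightarrow> real \<Rightarrow> ('a \<Rightarrow> real) \<Rightarrow> bool" where
  "homogeneous_on S \<alpha> f \<longleftrightarrow> (\<forall>x\<in>S. grad f x \<bullet> x = \<alpha> * f x)"

definition smooth_submanifold :: "nat \<Rightarrow> 'a::euclidean_space set \<Rightarrow> bool" where
  "smooth_submanifold d M \<longleftrightarrow> d \<le> DIM('a) \<and>
     (\<forall>p\<in>M. \<exists>U g. open U \<and> p \<in> U \<and> (\<forall>i<DIM('a) - d. smooth_on U (g i)) \<and>
        M \<inter> U = {x\<in>U. \<forall>i<DIM('a) - d. g i x = 0} \<and>
        (\<forall>x\<in>M \<inter> U. inj_on (\<lambda>i. grad (g i) x) {..<DIM('a) - d} \<and>
                     independent ((\<lambda>i. grad (g i) x) ` {..<DIM('a) - d})))"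

text \<open>Unnormalised s-dimensional Hausdorff outer measure (the normalising constant is
  irrelevant here since only positivity is used).\<close>
definition hausdorff_pre :: "real \<Rightarrow> real \<Rightarrow> 'a::euclidean_space set \<Rightarrow> ennreal" where
  "hausdorff_pre s \<delta> A = (INF C \<in> {C :: nat \<Rightarrow> 'a set. A \<subseteq> (\<Union>i. C i) \<and> (\<forall>i. bounded (C i) \<and> diameter (C i) \<le> \<delta>)}.
       (\<Sum>i. ennreal (diameter (C i) powr s)))"

definition hausdorff_measure :: "real \<Rightarrow> 'a::euclidean_space set \<Rightarrow> ennreal" where
  "hausdorff_measure s A = (SUP \<delta> \<in> {0<..}. hausdorff_pre s \<delta> A)"

definition open_cone :: "'a::euclidean_space set \<Rightarrow> bool" where
  "open_cone \<Sigma> \<longleftrightarrow> (\<exists>\<omega>. \<omega> \<subseteq> sphere 0 1 \<and> openin (top_of_set (sphere 0 1)) \<omega> \<and>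
      connected \<omega> \<and> \<omega> \<noteq> {} \<and> \<Sigma> = {t *\<^sub>R x | t x. x \<in> \<omega> \<and> 0 < t})"

definition Gam :: "'a::euclidean_space set \<Rightarrow> 'a set \<Rightarrow> 'a set" where
  "Gam \<Sigma> \<Omega> = frontier \<Omega> \<inter> \<Sigma>"

definition Gam1 :: "'a::euclidean_space set \<Rightarrow> 'a set \<Rightarrow> 'a set" where
  "Gam1 \<Sigma> \<Omega> = frontier \<Omega> - closure (Gam \<Sigma> \<Omega>)"

definition edge :: "'a::real_normed_vector set \<Rightarrow> 'a set" where
  "edge M = closure M - M"

definition sector_like :: "'a::euclidean_space set \<Rightarrow> 'a set \<Rightarrow> bool" where
  "sector_like \<Sigma> \<Omega> \<longleftrightarrow>
     open \<Omega> \<and> connected \<Omega> \<and> \<Omega> \<noteq> {} \<and> bounded \<Omega> \<and> \<Omega> \<subseteq> \<Sigma> \<and>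
     hausdorff_measure (real DIM('a) - 1) (Gam \<Sigma> \<Omega>) > 0 \<and>
     hausdorff_measure (real DIM('a) - 1) (Gam1 \<Sigma> \<Omega>) > 0 \<and>
     smooth_submanifold (DIM('a) - 1) (Gam \<Sigma> \<Omega>) \<and>
     edge (Gam \<Sigma> \<Omega>) = edge (Gam1 \<Sigma> \<Omega>) \<and>
     edge (Gam \<Sigma> \<Omega>) \<subseteq> frontier \<Omega> - {0} \<and>
     smooth_submanifold (DIM('a) - 2) (edge (Gam \<Sigma> \<Omega>))"

definition outward_normal :: "'a::euclidean_space set \<Rightarrow> 'a \<Rightarrow> 'a \<Rightarrow> bool" where
  "outward_normal \<Omega> p \<nu> \<longleftrightarrow> p \<in> frontier \<Omega> \<and>
     (\<exists>U g. open U \<and> p \<in> U \<and> smooth_on U g \<and> (\<forall>x\<in>U. grad g x \<noteq> 0) \<and>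
        \<Omega> \<inter> U = {x\<in>U. g x < 0} \<and> \<nu> = (1 / norm (grad g p)) *\<^sub>R grad g p)"

end

(*
  The conclusion is a pointwise identity in Omega: of the hypotheses only the equation
  Delta_f u = -1, the homogeneity of f and the regularity of u and f are needed.

  Write L = ln f and R h = <x, grad h>. Homogeneity of degree alpha says R L = alpha, and
  differentiating gives R (d_k L) = - d_k L. By the symmetry of second derivatives,
  d_k (R h) = d_k h + R (d_k h), hence Delta (R u) = 2 Delta u + R (Delta u). Applying R to
  Delta u = -1 - <grad L, grad u>, the terms <grad L, R (grad u)> cancel against those in
  <grad L, grad (R u)>, leaving Delta_f (R u) = 2 Delta_f u = -2.
*)

theory Submission
  imports Defs
begin

lemma dd_has_derivative: "h differentiable (at x) \<Longrightarrow> (h has_derivative (\<lambda>v. dd h v x)) (at x)"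
  unfolding dd_def by (rule frechet_derivative_works[THEN iffD1])

lemma dd_eqI: "(h has_derivative D) (at x) \<Longrightarrow> dd h v x = D v"
  unfolding dd_def by (metis frechet_derivative_at)

lemma dd_cong_open:
  assumes "open S" "x \<in> S" "\<And>y. y \<in> S \<Longrightarrow> h y = k y"
  shows "dd h v x = dd k v x"
proof -
  have "(h has_derivative D) (at x) \<longleftrightarrow> (k has_derivative D) (at x)" for D
  proof
    assume "(h has_derivative D) (at x)"
    then show "(k has_derivative D) (at x)"
      by (rule has_derivative_transform_within_open[OF _ assms(1,2)]) (simp add: assms(3))
  next
    assume "(k has_derivative D) (at x)"
    then show "(h has_derivative D) (at x)"
      by (rule has_derivative_transform_within_open[OF _ assms(1,2)]) (simp add: assms(3))
  qed
  then show ?thesis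
    unfolding dd_def frechet_derivative_def by simp
qed

lemma dd_const_on_open:
  assumes "open S" "x \<in> S" "\<And>y. y \<in> S \<Longrightarrow> h y = c"
  shows "dd h v x = 0"
proof -
  have "dd h v x = dd (\<lambda>y. c) v x"
    by (rule dd_cong_open[OF assms(1,2)]) (rule assms(3))
  also have "\<dots> = 0"
    by (rule dd_eqI) (rule has_derivative_const)
  finally show ?thesis .
qed

lemma linear_dd: "h differentiable (at x) \<Longrightarrow> linear (\<lambda>v. dd h v x)"
  using dd_has_derivative has_derivative_linear by blast

lemma dd_scaleR: "h differentiable (at x) \<Longrightarrow> dd h (c *\<^sub>R v) x = c * dd h v x"
  using linear_scale[OF linear_dd] by simp

lemma dd_add:
  "p differentiable (at x) \<Longrightarrow> q differentiable (at x) \<Longrightarrow>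
    dd (\<lambda>y. p y + q y) v x = dd p v x + dd q v x"
  by (rule dd_eqI) (intro has_derivative_add dd_has_derivative)

lemma dd_sum:
  assumes "finite I" "\<forall>i\<in>I. F i differentiable (at x)"
  shows "dd (\<lambda>y. \<Sum>i\<in>I. F i y) v x = (\<Sum>i\<in>I. dd (F i) v x)"
  by (rule dd_eqI) (use assms in \<open>auto intro!: has_derivative_sum dd_has_derivative\<close>)

lemma grad_inner_Basis:
  assumes "c \<in> Basis"
  shows "grad h x \<bullet> c = dd h c x"
proof -
  have "grad h x \<bullet> c = (\<Sum>b\<in>Basis. dd h b x * (b \<bullet> c))"
    unfolding grad_def by (simp add: inner_sum_left)
  also have "\<dots> = (\<Sum>b\<in>Basis. if b = c then dd h b x else 0)"
    by (rule sum.cong) (auto simp: inner_Basis assms)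
  finally show ?thesis
    using assms by simp
qed

lemma inner_grad_eq_sum_Basis: "v \<bullet> grad h x = (\<Sum>b\<in>Basis. (v \<bullet> b) * dd h b x)"
  by (subst euclidean_inner) (rule sum.cong, auto simp: grad_inner_Basis)

lemma grad_inner_grad: "grad h x \<bullet> grad k x = (\<Sum>b\<in>Basis. dd h b x * dd k b x)"
  by (subst euclidean_inner) (rule sum.cong, auto simp: grad_inner_Basis)

lemma inner_grad_eq_dd:
  assumes "h differentiable (at x)"
  shows "v \<bullet> grad h x = dd h v x"
proof -
  have "dd h v x = dd h (\<Sum>b\<in>Basis. (v \<bullet> b) *\<^sub>R b) x"
    by (simp add: euclidean_representation)
  also have "\<dots> = (\<Sum>b\<in>Basis. (v \<bullet> b) * dd h b x)"
    using linear_sum[OF linear_dd[OF assms], of "\<lambda>b. (v \<bullet> b) *\<^sub>R b" Basis]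
    by (simp add: o_def dd_scaleR[OF assms])
  finally show ?thesis
    by (simp add: inner_grad_eq_sum_Basis)
qed

lemma grad_cong_open:
  assumes "open S" "x \<in> S" "\<And>y. y \<in> S \<Longrightarrow> h y = k y"
  shows "grad h x = grad k x"
  unfolding grad_def using dd_cong_open[OF assms] by simp

definition second_diff :: "('a::real_normed_vector \<Rightarrow> real) \<Rightarrow> 'a \<Rightarrow> 'a \<Rightarrow> 'a \<Rightarrow> real \<Rightarrow> real" where
  "second_diff h x v w s = h (x + s *\<^sub>R v + s *\<^sub>R w) - h (x + s *\<^sub>R v) - h (x + s *\<^sub>R w) + h x"

lemma second_diff_commute: "second_diff h x v w s = second_diff h x w v s"
  unfolding second_diff_def by (simp add: ac_simps)

lemma second_diff_mean_value:
  fixes h :: "'a::euclidean_space \<Rightarrow> real"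
  assumes h: "\<forall>y\<in>S. h differentiable (at y)" and "0 < s"
    and segment: "\<And>t. 0 \<le> t \<Longrightarrow> t \<le> s \<Longrightarrow> x + t *\<^sub>R v \<in> S \<and> x + t *\<^sub>R v + s *\<^sub>R w \<in> S"
  shows "\<exists>t\<in>{0<..<s}. second_diff h x v w s
           = s * (dd h v (x + t *\<^sub>R v + s *\<^sub>R w) - dd h v (x + t *\<^sub>R v))"
proof -
  define \<phi> where "\<phi> t = h (x + t *\<^sub>R v + s *\<^sub>R w) - h (x + t *\<^sub>R v)" for t
  have der: "(\<phi> has_derivative (\<lambda>\<tau>. dd h (\<tau> *\<^sub>R v) (x + t *\<^sub>R v + s *\<^sub>R w) - dd h (\<tau> *\<^sub>R v) (x + t *\<^sub>R v)))
          (at t within {0..s})" if "0 \<le> t" "t \<le> s" for t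
  proof -
    have y1: "((\<lambda>t. x + t *\<^sub>R v + s *\<^sub>R w) has_derivative (\<lambda>\<tau>. \<tau> *\<^sub>R v)) (at t within {0..s})"
      and y0: "((\<lambda>t. x + t *\<^sub>R v) has_derivative (\<lambda>\<tau>. \<tau> *\<^sub>R v)) (at t within {0..s})"
      by (auto intro!: derivative_eq_intros)
    have h1: "(h has_derivative (\<lambda>a. dd h a (x + t *\<^sub>R v + s *\<^sub>R w))) (at (x + t *\<^sub>R v + s *\<^sub>R w))"
      and h0: "(h has_derivative (\<lambda>a. dd h a (x + t *\<^sub>R v))) (at (x + t *\<^sub>R v))"
      using h segment[OF that] by (simp_all add: dd_has_derivative)
    show ?thesis
      unfolding \<phi>_def
      by (rule has_derivative_diff[OF has_derivative_compose[OF y1 h1] has_derivative_compose[OF y0 h0]])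
  qed
  obtain t where t: "t \<in> {0<..<s}" and mv: "\<phi> s - \<phi> 0
      = dd h (s *\<^sub>R v) (x + t *\<^sub>R v + s *\<^sub>R w) - dd h (s *\<^sub>R v) (x + t *\<^sub>R v)"
    using mvt_simple[OF \<open>0 < s\<close> der] by auto
  have "x + t *\<^sub>R v \<in> S" "x + t *\<^sub>R v + s *\<^sub>R w \<in> S"
    using segment t by auto
  with mv h have "\<phi> s - \<phi> 0 = s * (dd h v (x + t *\<^sub>R v + s *\<^sub>R w) - dd h v (x + t *\<^sub>R v))"
    by (simp add: dd_scaleR right_diff_distrib)
  moreover have "\<phi> s - \<phi> 0 = second_diff h x v w s"
    unfolding \<phi>_def second_diff_def by simp
  ultimately show ?thesis
    using t by auto
qed

lemma second_diff_estimate: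
  fixes h :: "'a::euclidean_space \<Rightarrow> real"
  assumes h: "\<forall>y\<in>ball x r. h differentiable (at y)" and dv: "dd h v differentiable (at x)"
    and taylor: "\<And>y. norm (y - x) < r \<Longrightarrow>
      \<bar>dd h v y - dd h v x - dd (dd h v) (y - x) x\<bar> \<le> \<epsilon> * norm (y - x)"
    and "0 \<le> \<epsilon>" "0 < s" and small: "s * (norm v + norm w) < r"
  shows "\<bar>second_diff h x v w s - s\<^sup>2 * dd (dd h v) w x\<bar> \<le> 2 * \<epsilon> * (norm v + norm w) * s\<^sup>2"
proof -
  let ?A = "\<lambda>a. dd (dd h v) a x" and ?N = "norm v + norm w"
  have near: "norm (t *\<^sub>R v + s *\<^sub>R w) \<le> s * ?N" "norm (t *\<^sub>R v) \<le> s * ?N"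
    if "0 \<le> t" "t \<le> s" for t
  proof -
    have "norm (t *\<^sub>R v) \<le> s * norm v"
      using that by (simp add: mult_right_mono)
    moreover have "norm (t *\<^sub>R v + s *\<^sub>R w) \<le> norm (t *\<^sub>R v) + s * norm w"
      using norm_triangle_ineq[of "t *\<^sub>R v" "s *\<^sub>R w"] \<open>0 < s\<close> by simp
    moreover have "0 \<le> s * norm w"
      using \<open>0 < s\<close> by simp
    ultimately show "norm (t *\<^sub>R v + s *\<^sub>R w) \<le> s * ?N" "norm (t *\<^sub>R v) \<le> s * ?N"
      by (simp_all add: algebra_simps)
  qed
  have in_ball: "x + z \<in> ball x r" if "norm z < r" for z
    using that by (simp add: dist_norm)
  have "x + t *\<^sub>R v \<in> ball x r \<and> x + t *\<^sub>R v + s *\<^sub>R w \<in> ball x r" if "0 \<le> t" "t \<le> s" for t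
    using near[OF that] small in_ball[of "t *\<^sub>R v"] in_ball[of "t *\<^sub>R v + s *\<^sub>R w"]
    by (simp add: add.assoc)
  then obtain t where "t \<in> {0<..<s}" and mv: "second_diff h x v w s
      = s * (dd h v (x + t *\<^sub>R v + s *\<^sub>R w) - dd h v (x + t *\<^sub>R v))"
    using second_diff_mean_value[OF h \<open>0 < s\<close>] by blast
  then have t: "0 \<le> t" "t \<le> s"
    by auto
  have "\<bar>dd h v (x + t *\<^sub>R v + s *\<^sub>R w) - dd h v x - ?A (t *\<^sub>R v + s *\<^sub>R w)\<bar>
      \<le> \<epsilon> * norm (t *\<^sub>R v + s *\<^sub>R w)"
    using taylor[of "x + t *\<^sub>R v + s *\<^sub>R w"] near(1)[OF t] small by (simp add: add.assoc)
  also have "\<dots> \<le> \<epsilon> * (s * ?N)"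
    using near(1)[OF t] \<open>0 \<le> \<epsilon>\<close> by (rule mult_left_mono)
  finally have err1: "\<bar>dd h v (x + t *\<^sub>R v + s *\<^sub>R w) - dd h v x - ?A (t *\<^sub>R v + s *\<^sub>R w)\<bar>
      \<le> \<epsilon> * (s * ?N)" .
  have "\<bar>dd h v (x + t *\<^sub>R v) - dd h v x - ?A (t *\<^sub>R v)\<bar> \<le> \<epsilon> * norm (t *\<^sub>R v)"
    using taylor[of "x + t *\<^sub>R v"] near(2)[OF t] small by simp
  also have "\<dots> \<le> \<epsilon> * (s * ?N)"
    using near(2)[OF t] \<open>0 \<le> \<epsilon>\<close> by (rule mult_left_mono)
  finally have err0: "\<bar>dd h v (x + t *\<^sub>R v) - dd h v x - ?A (t *\<^sub>R v)\<bar> \<le> \<epsilon> * (s * ?N)" .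
  have "?A (t *\<^sub>R v + s *\<^sub>R w) - ?A (t *\<^sub>R v) = s * ?A w"
    using linear_add[OF linear_dd[OF dv]] linear_scale[OF linear_dd[OF dv]] by simp
  then have "\<bar>dd h v (x + t *\<^sub>R v + s *\<^sub>R w) - dd h v (x + t *\<^sub>R v) - s * ?A w\<bar> \<le> 2 * \<epsilon> * (s * ?N)"
    using err1 err0 by linarith
  moreover have "second_diff h x v w s - s\<^sup>2 * ?A w
      = s * (dd h v (x + t *\<^sub>R v + s *\<^sub>R w) - dd h v (x + t *\<^sub>R v) - s * ?A w)"
    unfolding mv by (simp add: power2_eq_square algebra_simps)
  ultimately show ?thesis
    using \<open>0 < s\<close> by (simp add: abs_mult power2_eq_square mult_left_mono mult_ac)
qed

lemma second_diff_tendsto: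
  fixes h :: "'a::euclidean_space \<Rightarrow> real"
  assumes "open S" "x \<in> S" and h: "\<forall>y\<in>S. h differentiable (at y)"
    and dv: "dd h v differentiable (at x)"
  shows "((\<lambda>s. second_diff h x v w s / s\<^sup>2) \<longlongrightarrow> dd (dd h v) w x) (at_right 0)"
  unfolding tendsto_iff
proof (intro allI impI)
  fix e :: real
  assume "e > 0"
  define N where "N = norm v + norm w"
  define \<epsilon> where "\<epsilon> = e / (4 * (N + 1))"
  have "N \<ge> 0"
    by (simp add: N_def)
  then have "\<epsilon> > 0"
    using \<open>e > 0\<close> by (simp add: \<epsilon>_def)
  have "e * N < e * (2 * (N + 1))"
    using \<open>e > 0\<close> \<open>N \<ge> 0\<close> by (intro mult_strict_left_mono) auto
  then have "2 * \<epsilon> * N < e"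
    using \<open>N \<ge> 0\<close> by (simp add: \<epsilon>_def divide_less_eq algebra_simps)
  obtain d where "d > 0" and d: "\<And>y. norm (y - x) < d \<Longrightarrow>
      \<bar>dd h v y - dd h v x - dd (dd h v) (y - x) x\<bar> \<le> \<epsilon> * norm (y - x)"
    using dd_has_derivative[OF dv] \<open>\<epsilon> > 0\<close> unfolding has_derivative_at_alt real_norm_def by blast
  obtain r where "r > 0" "ball x r \<subseteq> S"
    using assms(1,2) open_contains_ball by blast
  define \<rho> where "\<rho> = min d r"
  have h_\<rho>: "\<forall>y\<in>ball x \<rho>. h differentiable (at y)"
    using h \<open>ball x r \<subseteq> S\<close> by (auto simp: \<rho>_def)
  have d_\<rho>: "\<And>y. norm (y - x) < \<rho> \<Longrightarrow>
      \<bar>dd h v y - dd h v x - dd (dd h v) (y - x) x\<bar> \<le> \<epsilon> * norm (y - x)"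
    using d by (simp add: \<rho>_def)
  show "\<forall>\<^sub>F s in at_right 0. dist (second_diff h x v w s / s\<^sup>2) (dd (dd h v) w x) < e"
    unfolding eventually_at_right_field
  proof (intro exI[of _ "\<rho> / (N + 1)"] conjI allI impI)
    show "0 < \<rho> / (N + 1)"
      using \<open>d > 0\<close> \<open>r > 0\<close> \<open>N \<ge> 0\<close> by (simp add: \<rho>_def)
    fix s :: real
    assume "0 < s" "s < \<rho> / (N + 1)"
    then have "s * N < \<rho>"
      using \<open>N \<ge> 0\<close> by (simp add: field_simps)
    then have "\<bar>second_diff h x v w s - s\<^sup>2 * dd (dd h v) w x\<bar> \<le> 2 * \<epsilon> * N * s\<^sup>2"
      using second_diff_estimate[OF h_\<rho> dv d_\<rho>] \<open>0 < s\<close> \<open>\<epsilon> > 0\<close>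
      unfolding N_def by simp
    also have "\<dots> < e * s\<^sup>2"
      using \<open>2 * \<epsilon> * N < e\<close> \<open>0 < s\<close> by simp
    finally show "dist (second_diff h x v w s / s\<^sup>2) (dd (dd h v) w x) < e"
      using \<open>0 < s\<close> by (simp add: dist_real_def field_simps)
  qed
qed

lemma dd_dd_commute:
  fixes h :: "'a::euclidean_space \<Rightarrow> real"
  assumes "open S" "x \<in> S" "\<forall>y\<in>S. h differentiable (at y)"
    and "dd h v differentiable (at x)" "dd h w differentiable (at x)"
  shows "dd (dd h v) w x = dd (dd h w) v x"
  using second_diff_tendsto[OF assms(1-4), of w] second_diff_tendsto[OF assms(1-3,5), of v]
  by (simp add: second_diff_commute tendsto_unique[OF trivial_limit_at_right_real])

definition twice_differentiable_on :: "'a::euclidean_space set \<Rightarrow> ('a \<Rightarrow> real) \<Rightarrow> bool" where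
  "twice_differentiable_on S h \<longleftrightarrow>
     (\<forall>y\<in>S. h differentiable (at y)) \<and> (\<forall>v. \<forall>y\<in>S. dd h v differentiable (at y))"

lemma Ck_on_imp_twice_differentiable_on: "Ck_on (Suc (Suc k)) S h \<Longrightarrow> twice_differentiable_on S h"
  unfolding twice_differentiable_on_def by simp

lemma twice_differentiable_on_subset:
  "twice_differentiable_on S h \<Longrightarrow> T \<subseteq> S \<Longrightarrow> twice_differentiable_on T h"
  unfolding twice_differentiable_on_def by blast

lemma hess_commute:
  "open S \<Longrightarrow> twice_differentiable_on S h \<Longrightarrow> x \<in> S \<Longrightarrow> hess h x v w = hess h x w v"
  unfolding twice_differentiable_on_def hess_def by (rule dd_dd_commute) auto

lemma dd_ln:
  assumes "f differentiable (at y)" "f y > 0"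
  shows "dd (\<lambda>z. ln (f z)) v y = dd f v y / f y"
  using dd_eqI[OF has_derivative_ln[OF assms(2) dd_has_derivative[OF assms(1)]]]
  by (simp add: divide_inverse)

lemma twice_differentiable_on_ln:
  assumes "open S" and f: "twice_differentiable_on S f" and pos: "\<forall>y\<in>S. f y > 0"
  shows "twice_differentiable_on S (\<lambda>y. ln (f y))"
  unfolding twice_differentiable_on_def
proof (intro conjI ballI allI)
  fix y assume "y \<in> S"
  then show "(\<lambda>y. ln (f y)) differentiable (at y)"
    using f pos has_derivative_ln[OF _ dd_has_derivative]
    unfolding twice_differentiable_on_def differentiable_def by blast
next
  fix v y assume "y \<in> S"
  have "(\<lambda>z. dd f v z / f z) differentiable (at y)"
    using f pos \<open>y \<in> S\<close> unfolding twice_differentiable_on_def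
    by (intro differentiable_divide) auto
  then obtain D where "((\<lambda>z. dd f v z / f z) has_derivative D) (at y)"
    unfolding differentiable_def by blast
  then have "(dd (\<lambda>z. ln (f z)) v has_derivative D) (at y)"
    by (rule has_derivative_transform_within_open[OF _ assms(1) \<open>y \<in> S\<close>])
       (use f pos in \<open>simp add: twice_differentiable_on_def dd_ln\<close>)
  then show "dd (\<lambda>z. ln (f z)) v differentiable (at y)"
    unfolding differentiable_def by blast
qed

lemma inner_grad_ln_homogeneous:
  assumes "homogeneous_on S \<alpha> f" "y \<in> S" "f differentiable (at y)" "f y > 0"
  shows "y \<bullet> grad (\<lambda>z. ln (f z)) y = \<alpha>"
proof -
  have "(\<lambda>z. ln (f z)) differentiable (at y)"
    using has_derivative_ln[OF assms(4) dd_has_derivative[OF assms(3)]]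
    unfolding differentiable_def by blast
  then have "y \<bullet> grad (\<lambda>z. ln (f z)) y = dd f y y / f y"
    by (simp add: inner_grad_eq_dd dd_ln assms(3,4))
  also have "\<dots> = (grad f y \<bullet> y) / f y"
    by (simp add: inner_grad_eq_dd assms(3) inner_commute)
  also have "\<dots> = \<alpha>"
    using assms(1,2,4) unfolding homogeneous_on_def by simp
  finally show ?thesis .
qed

lemma has_derivative_inner_grad:
  assumes "\<forall>b\<in>Basis. dd h b differentiable (at x)"
  shows "((\<lambda>y. y \<bullet> grad h y) has_derivative
           (\<lambda>v. v \<bullet> grad h x + (\<Sum>b\<in>Basis. (x \<bullet> b) * dd (dd h b) v x))) (at x)"
proof -
  have "((\<lambda>y. \<Sum>b\<in>Basis. (y \<bullet> b) * dd h b y) has_derivative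
          (\<lambda>v. \<Sum>b\<in>Basis. (x \<bullet> b) * dd (dd h b) v x + (v \<bullet> b) * dd h b x)) (at x)"
    using assms by (intro has_derivative_sum has_derivative_mult bounded_linear_imp_has_derivative
        bounded_linear_inner_left dd_has_derivative) auto
  then show ?thesis
    by (simp add: inner_grad_eq_sum_Basis sum.distrib add.commute)
qed

lemma dd_inner_grad:
  assumes "open S" "twice_differentiable_on S h" "x \<in> S"
  shows "dd (\<lambda>y. y \<bullet> grad h y) v x = dd h v x + x \<bullet> grad (dd h v) x"
proof -
  have h: "h differentiable (at x)" "\<forall>b. dd h b differentiable (at x)"
    using assms(2,3) unfolding twice_differentiable_on_def by auto
  have "dd (\<lambda>y. y \<bullet> grad h y) v x = v \<bullet> grad h x + (\<Sum>b\<in>Basis. (x \<bullet> b) * dd (dd h b) v x)"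
    using dd_eqI[OF has_derivative_inner_grad[of h x]] h(2) by simp
  also have "\<dots> = dd h v x + x \<bullet> grad (dd h v) x"
    using hess_commute[OF assms] unfolding hess_def
    by (simp add: inner_grad_eq_dd[OF h(1)] inner_grad_eq_sum_Basis[of x "dd h v"])
  finally show ?thesis .
qed

lemma lap_inner_grad:
  assumes "open S" "Ck_on 3 S u" "x \<in> S"
  shows "lap (\<lambda>y. y \<bullet> grad u y) x = 2 * lap u x + x \<bullet> grad (lap u) x"
proof -
  have u: "twice_differentiable_on S u" and du: "\<And>k. twice_differentiable_on S (dd u k)"
    using assms(2) by (simp_all add: numeral_3_eq_3 twice_differentiable_on_def)
  have ddu: "\<And>k. dd u k differentiable (at x)" "\<And>k j. dd (dd u k) j differentiable (at x)"
    using u du assms(3) unfolding twice_differentiable_on_def by auto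
  have lap_eq: "lap h = (\<lambda>y. \<Sum>k\<in>Basis. dd (dd h k) k y)" for h :: "'a \<Rightarrow> real"
    unfolding lap_def hess_def by simp
  have "dd (dd (\<lambda>y. y \<bullet> grad u y) k) k x = 2 * dd (dd u k) k x + x \<bullet> grad (dd (dd u k) k) x" for k
  proof -
    have "dd (dd (\<lambda>y. y \<bullet> grad u y) k) k x = dd (\<lambda>y. dd u k y + y \<bullet> grad (dd u k) y) k x"
      by (rule dd_cong_open[OF assms(1,3)]) (rule dd_inner_grad[OF assms(1) u])
    also have "\<dots> = dd (dd u k) k x + dd (\<lambda>y. y \<bullet> grad (dd u k) y) k x"
      using ddu has_derivative_inner_grad[of "dd u k" x] by (intro dd_add) (auto simp: differentiable_def)
    also have "\<dots> = 2 * dd (dd u k) k x + x \<bullet> grad (dd (dd u k) k) x"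
      using dd_inner_grad[OF assms(1) du assms(3)] by simp
    finally show ?thesis .
  qed
  then have "lap (\<lambda>y. y \<bullet> grad u y) x = 2 * lap u x + (\<Sum>k\<in>Basis. x \<bullet> grad (dd (dd u k) k) x)"
    by (simp add: lap_eq sum.distrib sum_distrib_left)
  also have "(\<Sum>k\<in>Basis. x \<bullet> grad (dd (dd u k) k) x) = x \<bullet> grad (lap u) x"
    using ddu by (simp add: lap_eq inner_grad_eq_dd dd_sum)
  finally show ?thesis .
qed

lemma inner_grad_dd_Euler:
  assumes "open S" "twice_differentiable_on S L" "\<forall>y\<in>S. y \<bullet> grad L y = \<alpha>" "x \<in> S"
  shows "x \<bullet> grad (dd L v) x = - dd L v x"
proof -
  have "dd L v x + x \<bullet> grad (dd L v) x = dd (\<lambda>y. y \<bullet> grad L y) v x"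
    using dd_inner_grad[OF assms(1,2,4)] by simp
  also have "\<dots> = 0"
    using assms(3) by (intro dd_const_on_open[OF assms(1,4)]) auto
  finally show ?thesis
    by simp
qed

lemma weighted_lap_inner_grad:
  assumes "open S" and u: "Ck_on 3 S u" and L: "twice_differentiable_on S L"
    and Euler: "\<forall>y\<in>S. y \<bullet> grad L y = \<alpha>"
    and eq: "\<forall>y\<in>S. lap u y + grad L y \<bullet> grad u y = \<kappa>" and "x \<in> S"
  shows "lap (\<lambda>y. y \<bullet> grad u y) x + grad L x \<bullet> grad (\<lambda>y. y \<bullet> grad u y) x = 2 * \<kappa>"
proof -
  let ?P = "\<lambda>k. dd L k x" and ?U = "\<lambda>k. dd u k x" and ?RU = "\<lambda>k. x \<bullet> grad (dd u k) x"
  have u2: "twice_differentiable_on S u" and du: "\<And>k. twice_differentiable_on S (dd u k)"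
    using u by (simp_all add: numeral_3_eq_3 twice_differentiable_on_def)
  have diff: "\<And>k. dd L k differentiable (at x)" "\<And>k. dd u k differentiable (at x)"
    using L du \<open>x \<in> S\<close> unfolding twice_differentiable_on_def by auto
  define F where "F y = \<kappa> - (\<Sum>k\<in>Basis. dd L k y * dd u k y)" for y
  have F: "(F has_derivative
      (\<lambda>a. 0 - (\<Sum>k\<in>Basis. ?P k * dd (dd u k) a x + dd (dd L k) a x * ?U k))) (at x)"
    unfolding F_def using diff
    by (intro has_derivative_diff has_derivative_const has_derivative_sum has_derivative_mult
        dd_has_derivative) auto
  have "x \<bullet> grad (lap u) x = x \<bullet> grad F x"
    using eq by (intro arg_cong[where f = "inner x"] grad_cong_open[OF assms(1) \<open>x \<in> S\<close>])
      (auto simp: F_def grad_inner_grad algebra_simps)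
  also have "\<dots> = dd F x x"
    using F by (intro inner_grad_eq_dd differentiableI)
  also have "\<dots> = - (\<Sum>k\<in>Basis. ?P k * dd (dd u k) x x + dd (dd L k) x x * ?U k)"
    using dd_eqI[OF F] by simp
  also have "\<dots> = (\<Sum>k\<in>Basis. ?P k * ?U k - ?P k * ?RU k)"
    using inner_grad_dd_Euler[OF assms(1) L Euler \<open>x \<in> S\<close>] diff
    by (simp add: inner_grad_eq_dd flip: sum_negf)
  finally have radial_lap: "x \<bullet> grad (lap u) x = (\<Sum>k\<in>Basis. ?P k * ?U k - ?P k * ?RU k)" .
  have "grad L x \<bullet> grad (\<lambda>y. y \<bullet> grad u y) x = (\<Sum>k\<in>Basis. ?P k * (?U k + ?RU k))"
    by (simp add: grad_inner_grad dd_inner_grad[OF assms(1) u2 \<open>x \<in> S\<close>])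
  moreover have "lap u x + (\<Sum>k\<in>Basis. ?P k * ?U k) = \<kappa>"
    using eq \<open>x \<in> S\<close> by (simp add: grad_inner_grad)
  ultimately show ?thesis
    by (simp add: lap_inner_grad[OF assms(1) u \<open>x \<in> S\<close>] radial_lap algebra_simps sum.distrib
        sum_subtractf)
qed

lemma zero_notin_open_cone: "open_cone \<Sigma> \<Longrightarrow> 0 \<notin> \<Sigma>"
  unfolding open_cone_def by auto

theorem corollary4p2:
  fixes \<Sigma> \<Omega> :: "'a::euclidean_space set"
    and f u :: "'a \<Rightarrow> real" and \<alpha> c :: real
    and Du :: "'a \<Rightarrow> 'a"
  assumes dim: "DIM('a) \<ge> 2"
    and cone: "open_cone \<Sigma>"
    and cone_smooth: "smooth_submanifold (DIM('a) - 1) (frontier \<Sigma> - {0})"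
    and sector: "sector_like \<Sigma> \<Omega>"
    and f_smooth: "smooth_on (UNIV - {0}) f"
    and f_pos: "\<forall>x. x \<noteq> 0 \<longrightarrow> f x > 0"
    and f_hom: "homogeneous_on (UNIV - {0}) \<alpha> f"
    and alpha_pos: "\<alpha> > 0"
    and u_reg: "Ck_on 3 \<Omega> u"
    and u_cont: "continuous_on (closure \<Omega> - {0}) u"
    and Du_cont: "continuous_on (closure \<Omega> - {0}) Du"
    and Du_grad: "\<forall>x\<in>\<Omega>. Du x = grad u x"
    and eq: "\<forall>x\<in>\<Omega>. drift_lap f u x = -1"
    and bc_dir: "\<forall>p\<in>Gam \<Sigma> \<Omega>. u p = 0"
    and bc_neu: "\<forall>p\<in>Gam \<Sigma> \<Omega>. \<forall>\<nu>. outward_normal \<Omega> p \<nu> \<longrightarrow> Du p \<bullet> \<nu> = - c"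
    and bc_neu1: "\<forall>p\<in>Gam1 \<Sigma> \<Omega> - {0}. \<forall>\<nu>. outward_normal \<Omega> p \<nu> \<longrightarrow> Du p \<bullet> \<nu> = 0"
    and hess_cond: "\<forall>x\<in>\<Omega>. hess (\<lambda>y. ln (f y)) x (grad u x) (grad u x)
                        + (grad (\<lambda>y. ln (f y)) x \<bullet> grad u x)\<^sup>2 / \<alpha> \<le> 0"
  shows "\<forall>x\<in>\<Omega>. drift_lap f (\<lambda>y. y \<bullet> grad u y) x = -2"
proof
  fix x
  assume "x \<in> \<Omega>"
  have "open \<Omega>" and "\<Omega> \<subseteq> \<Sigma>"
    using sector unfolding sector_like_def by auto
  then have punctured: "\<Omega> \<subseteq> UNIV - {0}"
    using zero_notin_open_cone[OF cone] by blast
  have f2: "twice_differentiable_on (UNIV - {0}) f"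
    using f_smooth Ck_on_imp_twice_differentiable_on[of 0] unfolding smooth_on_def by blast
  let ?L = "\<lambda>y. ln (f y)"
  have "twice_differentiable_on \<Omega> ?L"
    using twice_differentiable_on_ln[OF _ f2] f_pos punctured
    by (intro twice_differentiable_on_subset[OF _ punctured]) (auto simp: open_delete)
  moreover have "\<forall>y\<in>\<Omega>. y \<bullet> grad ?L y = \<alpha>"
    using inner_grad_ln_homogeneous[OF f_hom] f2 f_pos punctured
    unfolding twice_differentiable_on_def by blast
  moreover have "\<forall>y\<in>\<Omega>. lap u y + grad ?L y \<bullet> grad u y = -1"
    using eq unfolding drift_lap_def .
  ultimately have "lap (\<lambda>y. y \<bullet> grad u y) x + grad ?L x \<bullet> grad (\<lambda>y. y \<bullet> grad u y) x = 2 * -1"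
    by (rule weighted_lap_inner_grad[OF \<open>open \<Omega>\<close> u_reg _ _ _ \<open>x \<in> \<Omega>\<close>])
  then show "drift_lap f (\<lambda>y. y \<bullet> grad u y) x = -2"
    unfolding drift_lap_def by simp
qed

end
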